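(* Let $\mathcal{T}$ be an MPQ-tree of an interval graph $G$, and let $S_1,\dots,S_k$ be the sections of some Q-node of $\mathcal{T}$; set $S_0=S_{k+1}=\emptyset$. For every pair of indices $1\le a<b\le k$ with $(a,b)\neq(1,k)$ there exists a vertex $$v\in\big((S_{a-1}\cap S_a)\setminus S_b\big)\cup\big((S_b\cap S_{b+1})\setminus S_a\big).$$
   Context: An MPQ-tree of an interval graph $G=(V,E)$, $V=\{1,\dots,n\}$, is a rooted plane tree whose nodes are P-nodes and Q-nodes. Each P-node carries a (possibly empty) set of vertices. A Q-node has $k\ge 3$ ordered positions $1,\dots,k$; position $i$ carries a set $S_i\subseteq V$ (the $i$-th section) and a child subtree $T_i$, which may be empty. Every vertex $v$ is assigned to exactly one node $node(v)$: either $v$ lies in the set of the P-node $node(v)$, or $node(v)$ is a Q-node and $v$ lies exactly in the sections $S_{l(v)},\dots,S_{r(v)}$ of it, with $l(v)<r(v)$. For a node with child subtrees $T_1,\dots,T_k$, $V_i$ denotes the set of vertices assigned to nodes of $T_i$ ($V_i=\emptyset$ if $T_i$ is empty). The maximal cliques of $G$ are in bijection with the descending paths from the root which at a P-node continue into one of its children (stopping if there is none) and at a Q-node choose a position $i$ and continue into $T_i$ (stopping if $T_i$ is empty); the clique is the union of the sets of the visited P-nodes and the chosen sections. Reading these cliques left to right gives a linear order of the maximal cliques, and the orders obtained this way after arbitrarily permuting children of P-nodes and reversing the positions of Q-nodes are exactly the orders of the maximal cliques of $G$ in which the cliques containing any fixed vertex are consecutive. Moreover, for every Q-node with sections $S_1,\dots,S_k$: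 (a) $V_1\neq\emptyset$ and $V_k\ne\emptyset$; (b) $S_1\subseteq S_2$ and $S_k\subseteq S_{k-1}$; (c) $S_{i-1}\cap S_i\neq\emptyset$ for $2\le i\le k$; (d) $S_{i-1}\neq S_i$ for $2\le i\le k$; (e) $(S_i\cap S_{i+1})\setminus S_1\neq\emptyset$ and $(S_{i-1}\cap S_i)\setminus S_k\neq\emptyset$ for $2\le i\le k-1$; (f) $(S_{i-1}\cup V_{i-1})\setminus S_i\neq\emptyset$ and $(S_i\cup V_i)\setminus S_{i-1}\neq\emptyset$ for $2\le i\le k$; and further (g) no empty P-node has an empty P-node as its parent, (h) no P-node has exactly one child whose root is a P-node, (i) every child subtree of a P-node is nonempty. *)

theory Defs
  imports Complex_Main "HOL-Library.Multiset"
begin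

definition graph :: "'v set \<Rightarrow> ('v \<times> 'v) set \<Rightarrow> bool" where
  "graph V E \<longleftrightarrow> finite V \<and> E \<subseteq> V \<times> V \<and> sym E \<and> irrefl E"

definition interval_graph :: "'v set \<Rightarrow> ('v \<times> 'v) set \<Rightarrow> bool" where
  "interval_graph V E \<longleftrightarrow> graph V E \<and>
     (\<exists>I :: 'v \<Rightarrow> real \<times> real. (\<forall>v\<in>V. fst (I v) \<le> snd (I v)) \<and>
        (\<forall>u\<in>V. \<forall>v\<in>V. u \<noteq> v \<longrightarrow>
            ((u, v) \<in> E \<longleftrightarrow> max (fst (I u)) (fst (I v)) \<le> min (snd (I u)) (snd (I v)))))"

definition is_clique :: "'v set \<Rightarrow> ('v \<times> 'v) set \<Rightarrow> 'v set \<Rightarrow> bool" where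
  "is_clique V E C \<longleftrightarrow> C \<subseteq> V \<and> (\<forall>u\<in>C. \<forall>v\<in>C. u \<noteq> v \<longrightarrow> (u, v) \<in> E)"

definition max_cliques :: "'v set \<Rightarrow> ('v \<times> 'v) set \<Rightarrow> 'v set set" where
  "max_cliques V E = {C. is_clique V E C \<and> (\<forall>D. is_clique V E D \<and> C \<subseteq> D \<longrightarrow> D = C)}"

definition consec_clique_order :: "'v set \<Rightarrow> ('v \<times> 'v) set \<Rightarrow> 'v set list \<Rightarrow> bool" where
  "consec_clique_order V E xs \<longleftrightarrow> distinct xs \<and> set xs = max_cliques V E \<and>
     (\<forall>v i j m. i \<le> m \<and> m \<le> j \<and> j < length xs \<and> v \<in> xs ! i \<and> v \<in> xs ! j \<longrightarrow> v \<in> xs ! m)"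

text \<open>A P-node carries a vertex set and a list of (nonempty) child subtrees;
  a Q-node carries the list of its positions, each a section and a possibly empty child subtree.\<close>
datatype 'v mpq = PNode "'v set" "'v mpq list" | QNode "('v set \<times> 'v mpq option) list"

fun vs :: "'v mpq \<Rightarrow> 'v set" where
  "vs (PNode A cs) = A \<union> \<Union> (set (map vs cs))"
| "vs (QNode ps) = \<Union> (set (map (\<lambda>p. fst p \<union> (case snd p of None \<Rightarrow> {} | Some t \<Rightarrow> vs t)) ps))"

definition vso :: "'v mpq option \<Rightarrow> 'v set" where
  "vso t = (case t of None \<Rightarrow> {} | Some c \<Rightarrow> vs c)"

fun nodes :: "'v mpq \<Rightarrow> 'v mpq set" where
  "nodes (PNode A cs) = insert (PNode A cs) (\<Union> (set (map nodes cs)))"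
| "nodes (QNode ps) = insert (QNode ps)
     (\<Union> (set (map (\<lambda>p. case snd p of None \<Rightarrow> {} | Some t \<Rightarrow> nodes t) ps)))"

text \<open>Maximal cliques read off the root-to-leaf paths, from left to right.\<close>
fun cliques :: "'v mpq \<Rightarrow> 'v set list" where
  "cliques (PNode A cs) = (if cs = [] then [A] else map ((\<union>) A) (concat (map cliques cs)))"
| "cliques (QNode ps) = concat (map (\<lambda>p. case snd p of None \<Rightarrow> [fst p]
                                         | Some t \<Rightarrow> map ((\<union>) (fst p)) (cliques t)) ps)"

text \<open>Section i (1-based) of a Q-node; sections 0 and k+1 are empty.\<close>
definition qsec :: "('v set \<times> 'v mpq option) list \<Rightarrow> nat \<Rightarrow> 'v set" where
  "qsec ps i = (if 1 \<le> i \<and> i \<le> length ps then fst (ps ! (i - 1)) else {})"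

text \<open>Child subtree at position i (1-based) of a Q-node, and its vertex set V_i.\<close>
definition qchildV :: "('v set \<times> 'v mpq option) list \<Rightarrow> nat \<Rightarrow> 'v set" where
  "qchildV ps i = (if 1 \<le> i \<and> i \<le> length ps then vso (snd (ps ! (i - 1))) else {})"

fun is_empty_pnode :: "'v mpq \<Rightarrow> bool" where
  "is_empty_pnode (PNode A cs) = (A = {})"
| "is_empty_pnode (QNode ps) = False"

fun node_ok :: "'v mpq \<Rightarrow> bool" where
  "node_ok (PNode A cs) \<longleftrightarrow>
     (\<forall>i < length cs. A \<inter> vs (cs ! i) = {}) \<and>
     (\<forall>i < length cs. \<forall>j < length cs. i \<noteq> j \<longrightarrow> vs (cs ! i) \<inter> vs (cs ! j) = {}) \<and>
     \<comment> \<open>(g)\<close>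
     (A = {} \<longrightarrow> (\<forall>c \<in> set cs. \<not> is_empty_pnode c)) \<and>
     \<comment> \<open>(h)\<close>
     (\<not> (\<exists>B ds. cs = [PNode B ds]))"
| "node_ok (QNode ps) \<longleftrightarrow>
     (let k = length ps; S = qsec ps; W = qchildV ps in
       k \<ge> 3 \<and>
       \<comment> \<open>vertices of children are disjoint from the sections and from each other\<close>
       (\<forall>i\<in>{1..k}. \<forall>j\<in>{1..k}. W i \<inter> S j = {}) \<and>
       (\<forall>i\<in>{1..k}. \<forall>j\<in>{1..k}. i \<noteq> j \<longrightarrow> W i \<inter> W j = {}) \<and>
       \<comment> \<open>every vertex of the Q-node lies exactly in sections l(v)..r(v) with l(v) < r(v)\<close>
       (\<forall>v \<in> (\<Union>i\<in>{1..k}. S i). \<exists>l r. 1 \<le> l \<and> l < r \<and> r \<le> k \<and>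
            (\<forall>i\<in>{1..k}. v \<in> S i \<longleftrightarrow> l \<le> i \<and> i \<le> r)) \<and>
       \<comment> \<open>(a)\<close>
       W 1 \<noteq> {} \<and> W k \<noteq> {} \<and>
       \<comment> \<open>(b)\<close>
       S 1 \<subseteq> S 2 \<and> S k \<subseteq> S (k - 1) \<and>
       \<comment> \<open>(c), (d)\<close>
       (\<forall>i\<in>{2..k}. S (i - 1) \<inter> S i \<noteq> {} \<and> S (i - 1) \<noteq> S i) \<and>
       \<comment> \<open>(e)\<close>
       (\<forall>i\<in>{2..k-1}. (S i \<inter> S (i + 1)) - S 1 \<noteq> {} \<and> (S (i - 1) \<inter> S i) - S k \<noteq> {}) \<and>
       \<comment> \<open>(f)\<close>
       (\<forall>i\<in>{2..k}. (S (i - 1) \<union> W (i - 1)) - S i \<noteq> {} \<and> (S i \<union> W i) - S (i - 1) \<noteq> {}))"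

inductive reorder :: "'v mpq \<Rightarrow> 'v mpq \<Rightarrow> bool" where
  reorderP: "list_all2 reorder cs ds \<Longrightarrow> mset es = mset ds \<Longrightarrow> reorder (PNode A cs) (PNode A es)"
| reorderQ: "list_all2 (rel_prod (=) (rel_option reorder)) ps qs \<Longrightarrow> rs = qs \<or> rs = rev qs
    \<Longrightarrow> reorder (QNode ps) (QNode rs)"
monos list_all2_mono option.rel_mono prod.rel_mono

text \<open>An MPQ-tree of the graph (V, E).  Condition (i) holds by construction
  (children of P-nodes are trees, not empty subtrees).\<close>
definition is_MPQ_tree :: "'v set \<Rightarrow> ('v \<times> 'v) set \<Rightarrow> 'v mpq \<Rightarrow> bool" where
  "is_MPQ_tree V E T \<longleftrightarrow> graph V E \<and> vs T = V \<and> (\<forall>t \<in> nodes T. node_ok t) \<and>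
     distinct (cliques T) \<and> set (cliques T) = max_cliques V E \<and>
     {cliques T' | T'. reorder T T'} = {xs. consec_clique_order V E xs}"

end

theory Submission
  imports Defs
begin

text \<open>
  Suppose the claim fails for \<open>a < b\<close>: every vertex of \<open>S_(a-1) \<inter> S_a\<close> lies in \<open>S_b\<close> and
  every vertex of \<open>S_b \<inter> S_(b+1)\<close> lies in \<open>S_a\<close>.  Then reversing the order of all maximal
  cliques through the positions \<open>a, \<dots>, b\<close> keeps the cliques containing any fixed vertex
  consecutive, because a vertex lying in some but not all of these cliques lies in no other
  clique.  By the characterisation of consecutive orders the reversed order is the clique order of
  a reordering of the tree.  A reordering either keeps the order of the positions of the Q-node,
  and then the clique following those of positions \<open>1, \<dots>, a - 1\<close> comes from position \<open>a\<close>
  rather than \<open>b\<close>; or it reverses them, and then the first clique comes from position \<open>k\<close>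
  rather than from position \<open>1\<close> (if \<open>a > 1\<close>) or \<open>b < k\<close> (if \<open>a = 1\<close>).  Since the cliques
  of different positions are distinct, both cases are impossible.
\<close>

lemma in_set_split_other_nth:
  assumes "xs = ys @ x # zs" "y \<in> set ys \<union> set zs"
  shows "\<exists>j<length xs. j \<noteq> length ys \<and> y = xs ! j"
  using assms(2)
proof
  assume "y \<in> set ys"
  then obtain j where "j < length ys" "y = ys ! j" by (auto simp: in_set_conv_nth)
  then show ?thesis using assms(1) by (intro exI[of _ j]) (simp add: nth_append)
next
  assume "y \<in> set zs"
  then obtain j where "j < length zs" "y = zs ! j" by (auto simp: in_set_conv_nth)
  then show ?thesis using assms(1) by (intro exI[of _ "Suc (length ys + j)"]) (simp add: nth_append)
qed

lemma in_set_take_drop_conv_nth: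
  "y \<in> set (take n (drop i xs)) \<longleftrightarrow> (\<exists>m. i \<le> m \<and> m < i + n \<and> m < length xs \<and> y = xs ! m)"
proof
  assume "y \<in> set (take n (drop i xs))"
  then obtain k where "k < length (take n (drop i xs))" "y = take n (drop i xs) ! k"
    by (auto simp: in_set_conv_nth)
  then show "\<exists>m. i \<le> m \<and> m < i + n \<and> m < length xs \<and> y = xs ! m"
    by (intro exI[of _ "i + k"]) auto
next
  assume "\<exists>m. i \<le> m \<and> m < i + n \<and> m < length xs \<and> y = xs ! m"
  then obtain m where "i \<le> m" "m < i + n" "m < length xs" "y = xs ! m" by blast
  then have "m - i < length (take n (drop i xs))" "take n (drop i xs) ! (m - i) = y" by auto
  then show "y \<in> set (take n (drop i xs))" by (metis nth_mem)
qed

lemma distinct_concat_nth_disjoint: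
  assumes "distinct (concat xs)" "[] \<notin> set xs" "i < length xs" "j < length xs" "i \<noteq> j"
  shows "set (xs ! i) \<inter> set (xs ! j) = {}"
proof -
  have "distinct xs" using assms(1,2) by (simp add: distinct_concat_iff removeAll_id)
  then have "xs ! i \<noteq> xs ! j" using assms(3-5) by (simp add: nth_eq_iff_index_eq)
  then show ?thesis using assms(1,3,4) by (simp add: distinct_concat_iff)
qed

lemma distinct_append_middle_eq:
  assumes "distinct (p1 @ m1 @ s1)" "p1 @ m1 @ s1 = p2 @ m2 @ s2" "set m1 = set m2"
  shows "m1 = m2"
proof (cases "m1 = []")
  case True
  then show ?thesis using assms(3) by simp
next
  case False
  define P where "P x \<longleftrightarrow> x \<notin> set m1" for x
  have prefix: "takeWhile P (p @ m @ s) = p" if "\<forall>x\<in>set p. P x" "m \<noteq> []" "\<not> P (hd m)" for p m s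
    using that by (cases m) (simp_all add: takeWhile_append2)
  have "p1 = takeWhile P (p1 @ m1 @ s1)"
    using assms(1) False by (intro prefix[symmetric]) (auto simp: P_def)
  moreover have "m2 \<noteq> []" using False assms(3) by auto
  then have "p2 = takeWhile P (p2 @ m2 @ s2)"
    using assms by (intro prefix[symmetric]) (auto simp: P_def)
  ultimately have "m1 @ s1 = m2 @ s2" using assms(2) by simp
  moreover have "length m1 = length m2"
    using assms(1,2,3) distinct_card[of m1] distinct_card[of m2] by (metis distinct_append)
  ultimately show ?thesis by simp
qed

lemma mset_concat_map_perm:
  assumes "mset xs = mset ys"
  shows "mset (concat (map f xs)) = mset (concat (map f ys))"
proof -
  have "mset (concat (map f zs)) = sum_mset (image_mset (mset \<circ> f) (mset zs))" for zs
    by (simp add: mset_concat sum_mset_sum_list[symmetric] mset_map[symmetric] del: mset_map)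
  then show ?thesis using assms by simp
qed

lemma mset_concat_map_list_all2:
  "list_all2 (\<lambda>x y. mset (f x) = mset (g y)) xs ys \<Longrightarrow>
    mset (concat (map f xs)) = mset (concat (map g ys))"
  by (induction rule: list_all2_induct) simp_all

section \<open>Consecutive boolean lists\<close>

definition consecutive :: "bool list \<Rightarrow> bool" where
  "consecutive bs \<longleftrightarrow> (\<exists>p q r. bs = replicate p False @ replicate q True @ replicate r False)"

lemma consecutive_iff_nth:
  "consecutive bs \<longleftrightarrow> (\<forall>i m j. i \<le> m \<and> m \<le> j \<and> j < length bs \<and> bs ! i \<and> bs ! j \<longrightarrow> bs ! m)"
  (is "_ \<longleftrightarrow> ?rhs")
proof
  show "consecutive bs \<Longrightarrow> ?rhs"
    by (auto simp: consecutive_def nth_append nth_replicate split: if_splits)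
next
  show "?rhs \<Longrightarrow> consecutive bs"
  proof (induction bs)
    case Nil
    show ?case by (simp add: consecutive_def)
  next
    case (Cons x bs)
    have "\<forall>i m j. i \<le> m \<and> m \<le> j \<and> j < length bs \<and> bs ! i \<and> bs ! j \<longrightarrow> bs ! m"
    proof (intro allI impI)
      fix i m j assume "i \<le> m \<and> m \<le> j \<and> j < length bs \<and> bs ! i \<and> bs ! j"
      then show "bs ! m" using Cons.prems[rule_format, of "Suc i" "Suc m" "Suc j"] by simp
    qed
    then obtain p q r where bs: "bs = replicate p False @ replicate q True @ replicate r False"
      using Cons.IH unfolding consecutive_def by blast
    consider "\<not> x" | "x" "p = 0" | "x" "q = 0" | "x" "0 < p" "0 < q" by auto
    then show ?case
    proof cases
      case 1
      then have "x # bs = replicate (Suc p) False @ replicate q True @ replicate r False"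
        using bs by simp
      then show ?thesis unfolding consecutive_def by blast
    next
      case 2
      then have "x # bs = replicate 0 False @ replicate (Suc q) True @ replicate r False"
        using bs by simp
      then show ?thesis unfolding consecutive_def by blast
    next
      case 3
      then have "x # bs = replicate 0 False @ replicate 1 True @ replicate (p + r) False"
        using bs by (simp add: replicate_add)
      then show ?thesis unfolding consecutive_def by blast
    next
      case 4
      \<comment> \<open>positions 0 and p + 1 carry True, position 1 does not\<close>
      then have False
        using Cons.prems[rule_format, of 0 1 "Suc p"] bs by (simp add: nth_append)
      then show ?thesis ..
    qed
  qed
qed

lemma consecutive_infix: "consecutive (A @ B @ C) \<Longrightarrow> consecutive B"
  unfolding consecutive_iff_nth
proof (intro allI impI)
  fix i m j
  assume H: "\<forall>i m j. i \<le> m \<and> m \<le> j \<and> j < length (A @ B @ C) \<and> (A @ B @ C) ! i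
      \<and> (A @ B @ C) ! j \<longrightarrow> (A @ B @ C) ! m"
    and h: "i \<le> m \<and> m \<le> j \<and> j < length B \<and> B ! i \<and> B ! j"
  have "(A @ B @ C) ! (length A + m)"
    using H[rule_format, of "length A + i" "length A + m" "length A + j"] h by (simp add: nth_append)
  then show "B ! m" using h by (simp add: nth_append)
qed

lemma consecutive_rev: "consecutive B \<Longrightarrow> consecutive (rev B)"
proof -
  assume "consecutive B"
  then obtain p q r where "B = replicate p False @ replicate q True @ replicate r False"
    unfolding consecutive_def by blast
  then have "rev B = replicate r False @ replicate q True @ replicate p False" by simp
  then show ?thesis unfolding consecutive_def by blast
qed

lemma True_notin_set_replicate_False: "True \<notin> set A \<Longrightarrow> \<exists>n. A = replicate n False"
  by (metis (full_types) replicate_length_same)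

lemma consecutive_pad:
  assumes "consecutive B" "True \<notin> set A" "True \<notin> set C"
  shows "consecutive (A @ B @ C)"
proof -
  obtain p q r where "B = replicate p False @ replicate q True @ replicate r False"
    using assms(1) unfolding consecutive_def by blast
  moreover obtain n n' where "A = replicate n False" "C = replicate n' False"
    using True_notin_set_replicate_False assms(2,3) by blast
  ultimately show ?thesis unfolding consecutive_def
    by (intro exI[of _ "n + p"] exI[of _ q] exI[of _ "r + n'"]) (simp only: replicate_add append_assoc)
qed

lemma consecutive_rev_middle:
  assumes "consecutive (A @ B @ C)"
    and "True \<in> set B \<Longrightarrow> False \<in> set B \<Longrightarrow> True \<notin> set A \<and> True \<notin> set C"
  shows "consecutive (A @ rev B @ C)"
proof (cases "True \<in> set B \<and> False \<in> set B")
  case True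
  have "consecutive B" using assms(1) by (rule consecutive_infix)
  then show ?thesis using True assms(2) by (intro consecutive_pad consecutive_rev) auto
next
  case False
  have "y = (True \<in> set B)" if y: "y \<in> set B" for y
  proof (cases y)
    case True
    then show ?thesis using y by simp
  next
    case False
    then have "False \<in> set B" using y by simp
    then show ?thesis using False \<open>\<not> (True \<in> set B \<and> False \<in> set B)\<close> by blast
  qed
  then have "replicate (length B) (True \<in> set B) = B" by (intro replicate_length_same) blast
  then have "rev B = B" by (metis rev_replicate)
  then show ?thesis using assms(1) by simp
qed

lemma consecutive_map_rev_middle:
  assumes "consecutive (map P (A @ B @ C))"
    and "\<And>x y. x \<in> set B \<Longrightarrow> y \<in> set B \<Longrightarrow> P x \<Longrightarrow> \<not> P y \<Longrightarrow> \<forall>z\<in>set A \<union> set C. \<not> P z"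
  shows "consecutive (map P (A @ rev B @ C))"
proof -
  have "consecutive (map P A @ rev (map P B) @ map P C)"
  proof (rule consecutive_rev_middle)
    show "consecutive (map P A @ map P B @ map P C)" using assms(1) by simp
  next
    assume "True \<in> set (map P B)" "False \<in> set (map P B)"
    then obtain x y where "x \<in> set B" "y \<in> set B" "P x" "\<not> P y"
      by (auto simp: image_iff)
    then have "\<forall>z\<in>set A \<union> set C. \<not> P z" by (rule assms(2))
    then show "True \<notin> set (map P A) \<and> True \<notin> set (map P C)" by auto
  qed
  then show ?thesis by (simp add: rev_map)
qed

lemma consec_clique_order_iff:
  "consec_clique_order V E xs \<longleftrightarrow>
    distinct xs \<and> set xs = max_cliques V E \<and> (\<forall>v. consecutive (map (\<lambda>c. v \<in> c) xs))"
proof -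
  have consecutive_v: "(\<forall>i j m. i \<le> m \<and> m \<le> j \<and> j < length xs \<and> v \<in> xs ! i \<and> v \<in> xs ! j
      \<longrightarrow> v \<in> xs ! m) \<longleftrightarrow> consecutive (map (\<lambda>c. v \<in> c) xs)" for v
    unfolding consecutive_iff_nth length_map
  proof (intro iffI allI impI)
    fix i m j
    assume H: "\<forall>i j m. i \<le> m \<and> m \<le> j \<and> j < length xs \<and> v \<in> xs ! i \<and> v \<in> xs ! j \<longrightarrow> v \<in> xs ! m"
      and h: "i \<le> m \<and> m \<le> j \<and> j < length xs \<and> map (\<lambda>c. v \<in> c) xs ! i \<and> map (\<lambda>c. v \<in> c) xs ! j"
    have "v \<in> xs ! i" "v \<in> xs ! j" using h by auto
    then have "v \<in> xs ! m" using h H[rule_format, of i m j] by blast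
    then show "map (\<lambda>c. v \<in> c) xs ! m" using h by auto
  next
    fix i j m
    assume H: "\<forall>i m j. i \<le> m \<and> m \<le> j \<and> j < length xs \<and> map (\<lambda>c. v \<in> c) xs ! i
        \<and> map (\<lambda>c. v \<in> c) xs ! j \<longrightarrow> map (\<lambda>c. v \<in> c) xs ! m"
      and h: "i \<le> m \<and> m \<le> j \<and> j < length xs \<and> v \<in> xs ! i \<and> v \<in> xs ! j"
    have "map (\<lambda>c. v \<in> c) xs ! i" "map (\<lambda>c. v \<in> c) xs ! j" using h by auto
    then have "map (\<lambda>c. v \<in> c) xs ! m" using h H[rule_format, of i m j] by blast
    then show "v \<in> xs ! m" using h by auto
  qed
  show ?thesis unfolding consec_clique_order_def consecutive_v ..
qed

section \<open>Nodes and cliques of MPQ-trees\<close>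

definition position_cliques :: "'v set \<times> 'v mpq option \<Rightarrow> 'v set list" where
  "position_cliques p = (case snd p of None \<Rightarrow> [fst p] | Some t \<Rightarrow> map ((\<union>) (fst p)) (cliques t))"

lemma cliques_QNode [simp]: "cliques (QNode ps) = concat (map position_cliques ps)"
  by (simp add: position_cliques_def[abs_def])

declare cliques.simps(2) [simp del]

lemma node_in_nodes: "t \<in> nodes t"
  by (cases t) auto

lemma nodes_child_PNode: "c \<in> set cs \<Longrightarrow> nodes c \<subseteq> nodes (PNode A cs)"
  by auto

lemma nodes_child_QNode: "p \<in> set ps \<Longrightarrow> snd p = Some t \<Longrightarrow> nodes t \<subseteq> nodes (QNode ps)"
  by force

lemma nodes_subset_nodes: "s \<in> nodes t \<Longrightarrow> nodes s \<subseteq> nodes t"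
proof (induction t rule: nodes.induct)
  case (1 A cs)
  then show ?case by auto
next
  case (2 ps)
  show ?case
  proof (cases "s = QNode ps")
    case False
    then obtain p t where "p \<in> set ps" "snd p = Some t" "s \<in> nodes t"
      using "2.prems" by (auto split: option.splits)
    then show ?thesis using "2.IH" nodes_child_QNode by blast
  qed simp
qed

lemma cliques_subset_vs: "c \<in> set (cliques t) \<Longrightarrow> c \<subseteq> vs t"
proof (induction t arbitrary: c rule: nodes.induct)
  case (1 A cs)
  then show ?case by (cases "cs = []") fastforce+
next
  case (2 ps)
  then obtain p where p: "p \<in> set ps" "c \<in> set (position_cliques p)"
    by auto
  show ?case
  proof (cases "snd p")
    case None
    then show ?thesis using p by (force simp: position_cliques_def)
  next
    case (Some t)
    then obtain d where "d \<in> set (cliques t)" "c = fst p \<union> d"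
      using p by (auto simp: position_cliques_def)
    then show ?thesis using 2(1)[OF p(1) Some] p(1) Some by force
  qed
qed

lemma position_cliques_bounds:
  "c \<in> set (position_cliques p) \<Longrightarrow> fst p \<subseteq> c \<and> c \<subseteq> fst p \<union> vso (snd p)"
  by (auto simp: position_cliques_def vso_def split: option.splits dest: cliques_subset_vs)

lemma cliques_nonempty: "\<forall>s\<in>nodes t. node_ok s \<Longrightarrow> cliques t \<noteq> []"
proof (induction t rule: nodes.induct)
  case (1 A cs)
  then show ?case by (cases cs) auto
next
  case (2 ps)
  then have "length ps \<ge> 3" by (simp add: Let_def del: node_ok.simps(1))
  then obtain p ps' where ps: "ps = p # ps'" by (cases ps) auto
  have "position_cliques p \<noteq> []"
  proof (cases "snd p")
    case (Some t)
    have "\<forall>s\<in>nodes t. node_ok s"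
      using "2.prems" nodes_child_QNode[of p ps t] ps Some by auto
    then have "cliques t \<noteq> []" using "2.IH"[of p t] ps Some by simp
    then show ?thesis using Some by (simp add: position_cliques_def)
  qed (simp add: position_cliques_def)
  then show ?case by (simp add: ps)
qed

lemma position_cliques_nonempty:
  assumes "\<forall>t\<in>nodes (QNode ps). node_ok t" "m < length ps"
  shows "position_cliques (ps ! m) \<noteq> []"
proof (cases "snd (ps ! m)")
  case (Some t)
  then have "nodes t \<subseteq> nodes (QNode ps)" using nodes_child_QNode[of "ps ! m" ps t] assms(2) by simp
  then have "cliques t \<noteq> []" using assms(1) cliques_nonempty by blast
  then show ?thesis using Some by (simp add: position_cliques_def)
qed (simp add: position_cliques_def)

lemma node_ok_QNode_disjoint:
  assumes "node_ok (QNode ps)" "i < length ps" "j < length ps"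
  shows node_ok_QNode_child_section: "vso (snd (ps ! i)) \<inter> fst (ps ! j) = {}"
    and node_ok_QNode_children: "i \<noteq> j \<Longrightarrow> vso (snd (ps ! i)) \<inter> vso (snd (ps ! j)) = {}"
proof -
  have "qchildV ps (Suc i) \<inter> qsec ps (Suc j) = {}"
    and "i \<noteq> j \<Longrightarrow> qchildV ps (Suc i) \<inter> qchildV ps (Suc j) = {}"
    using assms by (simp_all add: Let_def)
  then show "vso (snd (ps ! i)) \<inter> fst (ps ! j) = {}"
    and "i \<noteq> j \<Longrightarrow> vso (snd (ps ! i)) \<inter> vso (snd (ps ! j)) = {}"
    using assms(2,3) by (simp_all add: qsec_def qchildV_def)
qed

lemma qsec_Suc: "m < length ps \<Longrightarrow> qsec ps (Suc m) = fst (ps ! m)"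
  by (simp add: qsec_def)

lemma qsec_interval:
  assumes "node_ok (QNode ps)" "v \<in> qsec ps i"
  obtains l r where "\<And>j. v \<in> qsec ps j \<longleftrightarrow> l \<le> j \<and> j \<le> r"
proof -
  have "i \<in> {1..length ps}" using assms(2) by (auto simp: qsec_def split: if_splits)
  then have "v \<in> (\<Union>i\<in>{1..length ps}. qsec ps i)" using assms(2) by blast
  moreover have "\<forall>v \<in> (\<Union>i\<in>{1..length ps}. qsec ps i). \<exists>l r. 1 \<le> l \<and> l < r \<and> r \<le> length ps \<and>
      (\<forall>j\<in>{1..length ps}. v \<in> qsec ps j \<longleftrightarrow> l \<le> j \<and> j \<le> r)"
    using assms(1) by (simp add: Let_def)
  ultimately obtain l r where lr: "1 \<le> l" "r \<le> length ps"
    and sections: "\<forall>j\<in>{1..length ps}. v \<in> qsec ps j \<longleftrightarrow> l \<le> j \<and> j \<le> r"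
    by blast
  have "v \<in> qsec ps j \<longleftrightarrow> l \<le> j \<and> j \<le> r" for j
    using sections lr by (cases "j \<in> {1..length ps}") (auto simp: qsec_def)
  then show thesis by (rule that)
qed

lemma reorder_refl: "reorder t t"
proof (induction t rule: nodes.induct)
  case (1 A cs)
  have "list_all2 reorder cs cs" by (rule list.rel_refl_strong) (rule "1.IH")
  then show ?case by (rule reorderP) simp
next
  case (2 ps)
  have "rel_prod (=) (rel_option reorder) p p" if p: "p \<in> set ps" for p
  proof -
    have "rel_option reorder (snd p) (snd p)"
      by (rule option.rel_refl_strong) (use "2.IH" p in auto)
    then show ?thesis by (cases p) simp
  qed
  then have "list_all2 (rel_prod (=) (rel_option reorder)) ps ps"
    by (rule list.rel_refl_strong)
  then show ?case by (rule reorderQ) simp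
qed

lemma mset_position_cliques_rel:
  assumes "rel_prod (=) (rel_option (\<lambda>t t'. mset (cliques t) = mset (cliques t'))) p q"
  shows "mset (position_cliques p) = mset (position_cliques q)"
proof -
  obtain S x y where pq: "p = (S, x)" "q = (S, y)"
    and xy: "rel_option (\<lambda>t t'. mset (cliques t) = mset (cliques t')) x y"
    using assms by (cases p; cases q) auto
  show ?thesis
  proof (cases x)
    case None
    then show ?thesis using pq xy by (simp add: position_cliques_def)
  next
    case (Some t)
    then obtain t' where "y = Some t'" "mset (cliques t) = mset (cliques t')"
      using xy by (cases y) auto
    then show ?thesis using pq Some by (simp add: position_cliques_def)
  qed
qed

lemma mset_cliques_reorder: "reorder t t' \<Longrightarrow> mset (cliques t) = mset (cliques t')"
proof (induction rule: reorder.induct)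
  case (reorderP cs ds es A)
  have "mset (concat (map cliques cs)) = mset (concat (map cliques ds))"
    by (rule mset_concat_map_list_all2, rule list_all2_mono[OF reorderP(1)]) simp
  also have "\<dots> = mset (concat (map cliques es))"
    using mset_concat_map_perm[OF reorderP(2), of cliques] by simp
  finally have "mset (concat (map cliques cs)) = mset (concat (map cliques es))" .
  moreover have "cs = [] \<longleftrightarrow> es = []"
    using list_all2_lengthD[OF reorderP(1)] mset_eq_length[OF reorderP(2)] by auto
  ultimately show ?case by (simp add: mset_map)
next
  case (reorderQ ps qs rs)
  have "list_all2 (\<lambda>p q. mset (position_cliques p) = mset (position_cliques q)) ps qs"
  proof (rule list_all2_mono[OF reorderQ(1)])
    fix p q :: "'a set \<times> 'a mpq option"
    assume "rel_prod (=) (rel_option (\<lambda>t t'. reorder t t' \<and> mset (cliques t) = mset (cliques t'))) p q"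
    then have "rel_prod (=) (rel_option (\<lambda>t t'. mset (cliques t) = mset (cliques t'))) p q"
      by (rule prod.rel_mono_strong) (auto elim: option.rel_mono_strong)
    then show "mset (position_cliques p) = mset (position_cliques q)"
      by (rule mset_position_cliques_rel)
  qed
  then have "mset (concat (map position_cliques ps)) = mset (concat (map position_cliques qs))"
    by (rule mset_concat_map_list_all2)
  moreover have "mset (concat (map position_cliques rs)) = mset (concat (map position_cliques qs))"
    using reorderQ(2) mset_concat_map_perm[of "rev qs" qs position_cliques] by auto
  ultimately show ?case by simp
qed

section \<open>Subtrees and the context above them\<close>

text \<open>\<open>subtree_under U S T\<close>: \<open>S\<close> is a node of \<open>T\<close>, and \<open>U\<close> collects the P-node sets and
  sections on the path from the root of \<open>T\<close> down to \<open>S\<close>, so that the cliques of \<open>T\<close> through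
  \<open>S\<close> are the sets \<open>U \<union> c\<close> for the cliques \<open>c\<close> of \<open>S\<close>.\<close>

inductive subtree_under :: "'v set \<Rightarrow> 'v mpq \<Rightarrow> 'v mpq \<Rightarrow> bool" where
  subtree_under_refl: "subtree_under {} S S"
| subtree_under_PNode: "c \<in> set cs \<Longrightarrow> subtree_under U S c \<Longrightarrow> subtree_under (A \<union> U) S (PNode A cs)"
| subtree_under_QNode: "p \<in> set ps \<Longrightarrow> snd p = Some t \<Longrightarrow> subtree_under U S t
    \<Longrightarrow> subtree_under (fst p \<union> U) S (QNode ps)"

lemma subtree_under_exists: "S \<in> nodes T \<Longrightarrow> \<exists>U. subtree_under U S T"
proof (induction T rule: nodes.induct)
  case (1 A cs)
  then show ?case by (auto intro: subtree_under.intros)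
next
  case (2 ps)
  show ?case
  proof (cases "S = QNode ps")
    case False
    then obtain p t where "p \<in> set ps" "snd p = Some t" "S \<in> nodes t"
      using "2.prems" by (auto split: option.splits)
    then show ?thesis using "2.IH" by (blast intro: subtree_under_QNode)
  qed (blast intro: subtree_under_refl)
qed

lemma subtree_under_vs: "subtree_under U S T \<Longrightarrow> vs S \<subseteq> vs T"
  by (induction rule: subtree_under.induct) force+

lemma cliques_subtree_under:
  "subtree_under U S T \<Longrightarrow> \<exists>pre suf. cliques T = pre @ map ((\<union>) U) (cliques S) @ suf"
proof (induction rule: subtree_under.induct)
  case (subtree_under_refl S)
  have "cliques S = [] @ map ((\<union>) {}) (cliques S) @ []" by (simp add: map_idI)
  then show ?case by blast
next
  case (subtree_under_PNode c cs U S A)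
  then obtain pre suf cs1 cs2 where "cliques c = pre @ map ((\<union>) U) (cliques S) @ suf"
    and "cs = cs1 @ c # cs2" by (meson split_list)
  then have "cliques (PNode A cs) = map ((\<union>) A) (concat (map cliques cs1) @ pre)
      @ map ((\<union>) (A \<union> U)) (cliques S) @ map ((\<union>) A) (suf @ concat (map cliques cs2))"
    by (simp add: Un_assoc)
  then show ?case by blast
next
  case (subtree_under_QNode p ps t U S)
  then obtain pre suf ps1 ps2 where "cliques t = pre @ map ((\<union>) U) (cliques S) @ suf"
    and "ps = ps1 @ p # ps2" by (meson split_list)
  then have "cliques (QNode ps) = (concat (map position_cliques ps1) @ map ((\<union>) (fst p)) pre)
      @ map ((\<union>) (fst p \<union> U)) (cliques S)
      @ (map ((\<union>) (fst p)) suf @ concat (map position_cliques ps2))"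
    using subtree_under_QNode.hyps(2) by (simp add: position_cliques_def Un_assoc)
  then show ?case by blast
qed

lemma cliques_subtree_under_disjoint:
  assumes "subtree_under U S T" "\<forall>t\<in>nodes T. node_ok t"
  shows "U \<inter> vs S = {} \<and> (\<exists>pre suf. cliques T = pre @ map ((\<union>) U) (cliques S) @ suf
           \<and> (\<forall>c\<in>set pre \<union> set suf. c \<inter> vs S = {}))"
  using assms
proof (induction rule: subtree_under.induct)
  case (subtree_under_refl S)
  have "cliques S = [] @ map ((\<union>) {}) (cliques S) @ []" by (simp add: map_idI)
  then show ?case by fastforce
next
  case (subtree_under_PNode c cs U S A)
  have ok: "node_ok (PNode A cs)" using subtree_under_PNode.prems node_in_nodes by blast
  have "\<forall>t\<in>nodes c. node_ok t"
    using subtree_under_PNode.prems nodes_child_PNode[OF subtree_under_PNode.hyps(1)] by blast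
  then obtain pre suf where U: "U \<inter> vs S = {}"
    and c: "cliques c = pre @ map ((\<union>) U) (cliques S) @ suf"
    and pre_suf: "\<forall>d\<in>set pre \<union> set suf. d \<inter> vs S = {}"
    using subtree_under_PNode.IH by blast
  obtain cs1 cs2 where cs: "cs = cs1 @ c # cs2" using subtree_under_PNode.hyps(1) by (meson split_list)
  have Sc: "vs S \<subseteq> vs c" using subtree_under_PNode.hyps(2) by (rule subtree_under_vs)
  have c_nth: "c = cs ! length cs1" "length cs1 < length cs" using cs by simp_all
  have A: "A \<inter> vs S = {}" using ok Sc c_nth by auto
  have siblings: "vs x \<inter> vs S = {}" if x: "x \<in> set cs1 \<union> set cs2" for x
  proof -
    obtain j where "j < length cs" "j \<noteq> length cs1" "x = cs ! j"
      using in_set_split_other_nth[OF cs x] by blast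
    then have "vs x \<inter> vs c = {}" using ok c_nth by auto
    then show ?thesis using Sc by blast
  qed
  define pre' where "pre' = map ((\<union>) A) (concat (map cliques cs1) @ pre)"
  define suf' where "suf' = map ((\<union>) A) (suf @ concat (map cliques cs2))"
  have "cliques (PNode A cs) = pre' @ map ((\<union>) (A \<union> U)) (cliques S) @ suf'"
    using c cs by (simp add: pre'_def suf'_def Un_assoc)
  moreover have "\<forall>d\<in>set pre' \<union> set suf'. d \<inter> vs S = {}"
    unfolding pre'_def suf'_def using A pre_suf siblings by (fastforce dest: cliques_subset_vs)
  ultimately show ?case using A U by blast
next
  case (subtree_under_QNode p ps t U S)
  have ok: "node_ok (QNode ps)" using subtree_under_QNode.prems node_in_nodes by blast
  have "\<forall>s\<in>nodes t. node_ok s"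
    using subtree_under_QNode.prems nodes_child_QNode subtree_under_QNode.hyps(1,2) by blast
  then obtain pre suf where U: "U \<inter> vs S = {}"
    and t: "cliques t = pre @ map ((\<union>) U) (cliques S) @ suf"
    and pre_suf: "\<forall>d\<in>set pre \<union> set suf. d \<inter> vs S = {}"
    using subtree_under_QNode.IH by blast
  obtain ps1 ps2 where ps: "ps = ps1 @ p # ps2" using subtree_under_QNode.hyps(1) by (meson split_list)
  have p: "p = ps ! length ps1" "length ps1 < length ps" using ps by simp_all
  have St: "vs S \<subseteq> vso (snd p)"
    using subtree_under_vs[OF subtree_under_QNode.hyps(3)] subtree_under_QNode.hyps(2)
    by (simp add: vso_def)
  have sec: "fst p \<inter> vs S = {}" using node_ok_QNode_child_section[OF ok p(2) p(2)] p St by blast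
  have siblings: "c \<inter> vs S = {}" if q: "q \<in> set ps1 \<union> set ps2" and c: "c \<in> set (position_cliques q)" for q c
  proof -
    obtain j where j: "j < length ps" "j \<noteq> length ps1" "q = ps ! j"
      using in_set_split_other_nth[OF ps q] by blast
    have "c \<subseteq> fst q \<union> vso (snd q)" using position_cliques_bounds[OF c] by blast
    then show ?thesis
      using node_ok_QNode_child_section[OF ok p(2) j(1)] node_ok_QNode_children[OF ok p(2) j(1)]
        j p St by blast
  qed
  define pre' where "pre' = concat (map position_cliques ps1) @ map ((\<union>) (fst p)) pre"
  define suf' where "suf' = map ((\<union>) (fst p)) suf @ concat (map position_cliques ps2)"
  have "cliques (QNode ps) = pre' @ map ((\<union>) (fst p \<union> U)) (cliques S) @ suf'"
    using t ps subtree_under_QNode.hyps(2)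
    by (simp add: pre'_def suf'_def position_cliques_def Un_assoc)
  moreover have "\<forall>d\<in>set pre' \<union> set suf'. d \<inter> vs S = {}"
    unfolding pre'_def suf'_def using sec pre_suf siblings by fastforce
  ultimately show ?case using sec U by blast
qed

lemma subtree_under_reorder:
  "subtree_under U S T \<Longrightarrow> reorder T T' \<Longrightarrow> \<exists>S'. reorder S S' \<and> subtree_under U S' T'"
proof (induction arbitrary: T' rule: subtree_under.induct)
  case (subtree_under_refl S)
  then show ?case by (blast intro: subtree_under.intros)
next
  case (subtree_under_PNode c cs U S A)
  from subtree_under_PNode.prems obtain ds es where
    T': "T' = PNode A es" and cd: "list_all2 reorder cs ds" and es: "mset es = mset ds"
    by (cases rule: reorder.cases) auto
  obtain i where i: "i < length cs" "c = cs ! i"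
    using subtree_under_PNode.hyps(1) by (auto simp: in_set_conv_nth)
  have "reorder c (ds ! i)" using cd i by (simp add: list_all2_nthD)
  then obtain S' where "reorder S S'" "subtree_under U S' (ds ! i)"
    using subtree_under_PNode.IH by blast
  moreover have "ds ! i \<in> set es"
    using i cd es by (metis list_all2_lengthD mset_eq_setD nth_mem)
  ultimately show ?case unfolding T' by (blast intro: subtree_under.intros)
next
  case (subtree_under_QNode p ps t U S)
  from subtree_under_QNode.prems obtain qs rs where
    T': "T' = QNode rs" and pq: "list_all2 (rel_prod (=) (rel_option reorder)) ps qs"
    and rs: "rs = qs \<or> rs = rev qs"
    by (cases rule: reorder.cases) auto
  obtain j where j: "j < length ps" "p = ps ! j"
    using subtree_under_QNode.hyps(1) by (auto simp: in_set_conv_nth)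
  have "rel_prod (=) (rel_option reorder) p (qs ! j)" using pq j by (simp add: list_all2_nthD)
  then obtain t' where q: "qs ! j = (fst p, Some t')" and "reorder t t'"
    using subtree_under_QNode.hyps(2)
    by (cases p; cases "qs ! j") (auto simp: option_rel_Some1)
  then obtain S' where "reorder S S'" "subtree_under U S' t'"
    using subtree_under_QNode.IH by blast
  moreover have "qs ! j \<in> set rs"
    using j pq rs by (auto dest: list_all2_lengthD)
  ultimately show ?case unfolding T' using q by (metis fst_conv snd_conv subtree_under.intros(3))
qed

section \<open>Reversing a segment of a Q-node\<close>

text \<open>Positions are counted from 0 here: \<open>segment_cliques ps i j\<close> lists the cliques through
  the positions \<open>i, \<dots>, j - 1\<close>, whose sections are \<open>qsec ps (i + 1), \<dots>, qsec ps j\<close>.\<close>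

definition segment_cliques :: "('v set \<times> 'v mpq option) list \<Rightarrow> nat \<Rightarrow> nat \<Rightarrow> 'v set list" where
  "segment_cliques ps i j = concat (map position_cliques (take (j - i) (drop i ps)))"

lemma segment_cliques_empty [simp]: "j \<le> i \<Longrightarrow> segment_cliques ps i j = []"
  by (simp add: segment_cliques_def)

lemma segment_cliques_append:
  assumes "i \<le> j" "j \<le> l"
  shows "segment_cliques ps i j @ segment_cliques ps j l = segment_cliques ps i l"
proof -
  have "take (l - i) (drop i ps) = take (j - i) (drop i ps) @ take (l - j) (drop j ps)"
    using take_add[of "j - i" "l - j" "drop i ps"] assms by (simp add: add.commute)
  then show ?thesis by (simp add: segment_cliques_def)
qed

lemma segment_cliques_single: "i < length ps \<Longrightarrow> segment_cliques ps i (Suc i) = position_cliques (ps ! i)"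
  by (simp add: segment_cliques_def take_Suc_conv_app_nth)

lemma segment_cliques_all: "segment_cliques ps 0 (length ps) = cliques (QNode ps)"
  by (simp add: segment_cliques_def)

lemma set_segment_cliques:
  "c \<in> set (segment_cliques ps i j) \<longleftrightarrow>
    (\<exists>m. i \<le> m \<and> m < j \<and> m < length ps \<and> c \<in> set (position_cliques (ps ! m)))"
proof -
  have "c \<in> set (segment_cliques ps i j) \<longleftrightarrow>
      (\<exists>y. y \<in> set (take (j - i) (drop i ps)) \<and> c \<in> set (position_cliques y))"
    by (auto simp: segment_cliques_def)
  also have "\<dots> \<longleftrightarrow> (\<exists>m. i \<le> m \<and> m < j \<and> m < length ps \<and> c \<in> set (position_cliques (ps ! m)))"
    unfolding in_set_take_drop_conv_nth by (auto simp del: split_paired_Ex) blast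
  finally show ?thesis .
qed

lemma hd_segment_cliques:
  assumes "i < j" "j \<le> length ps" "position_cliques (ps ! i) \<noteq> []"
  shows "hd (segment_cliques ps i j @ xs) \<in> set (position_cliques (ps ! i))"
proof -
  have "segment_cliques ps i j = position_cliques (ps ! i) @ segment_cliques ps (Suc i) j"
    using assms segment_cliques_append[of i "Suc i" j ps] segment_cliques_single[of i ps] by simp
  then show ?thesis using assms(3) by simp
qed

lemma last_segment_cliques:
  assumes "i < j" "j \<le> length ps" "position_cliques (ps ! (j - 1)) \<noteq> []"
  shows "last (segment_cliques ps i j) \<in> set (position_cliques (ps ! (j - 1)))"
proof -
  have "segment_cliques ps i j = segment_cliques ps i (j - 1) @ position_cliques (ps ! (j - 1))"
    using assms segment_cliques_append[of i "j - 1" j ps] segment_cliques_single[of "j - 1" ps] by simp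
  then show ?thesis using assms(3) by simp
qed

lemma length_segment_cliques_eq:
  assumes "length qs = length ps"
    and "\<And>m. m < length ps \<Longrightarrow> length (position_cliques (qs ! m)) = length (position_cliques (ps ! m))"
  shows "length (segment_cliques qs i j) = length (segment_cliques ps i j)"
proof -
  have "map (length \<circ> position_cliques) qs = map (length \<circ> position_cliques) ps"
    using assms by (simp add: list_eq_iff_nth_eq)
  then show ?thesis
    by (simp add: segment_cliques_def length_concat drop_map[symmetric] take_map[symmetric])
qed

definition reversed_segment_cliques ::
  "('v set \<times> 'v mpq option) list \<Rightarrow> nat \<Rightarrow> nat \<Rightarrow> 'v set list" where
  "reversed_segment_cliques ps i j =
     segment_cliques ps 0 i @ rev (segment_cliques ps i j) @ segment_cliques ps j (length ps)"

lemma mset_reversed_segment_cliques: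
  assumes "i \<le> j" "j \<le> length ps"
  shows "mset (reversed_segment_cliques ps i j) = mset (cliques (QNode ps))"
proof -
  have "segment_cliques ps 0 (length ps)
      = (segment_cliques ps 0 i @ segment_cliques ps i j) @ segment_cliques ps j (length ps)"
    by (simp only: segment_cliques_append assms le0)
  then show ?thesis by (simp add: reversed_segment_cliques_def segment_cliques_all[symmetric] del: cliques_QNode)
qed

text \<open>A vertex of a child subtree occurs at one position only.  A section vertex occupies an
  interval of sections; if that interval meets the segment \<open>a, \<dots>, b\<close> without covering it and
  reaches beyond it, it contains \<open>a - 1, a\<close> but not \<open>b\<close>, or \<open>b, b + 1\<close> but not \<open>a\<close>.\<close>

lemma vertex_split_by_segment_not_outside:
  assumes ok: "node_ok (QNode ps)"
    and H1: "qsec ps (a - 1) \<inter> qsec ps a \<subseteq> qsec ps b"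
    and H2: "qsec ps b \<inter> qsec ps (b + 1) \<subseteq> qsec ps a"
    and ab: "1 \<le> a" "a < b"
    and c1: "c1 \<in> set (segment_cliques ps (a - 1) b)" "v \<in> c1"
    and c2: "c2 \<in> set (segment_cliques ps (a - 1) b)" "v \<notin> c2"
    and c3: "c3 \<in> set (segment_cliques ps 0 (a - 1)) \<union> set (segment_cliques ps b (length ps))"
  shows "v \<notin> c3"
proof
  assume v3: "v \<in> c3"
  obtain m1 where m1: "a - 1 \<le> m1" "m1 < b" "m1 < length ps" "c1 \<in> set (position_cliques (ps ! m1))"
    using c1(1) unfolding set_segment_cliques by blast
  obtain m2 where m2: "a - 1 \<le> m2" "m2 < b" "m2 < length ps" "c2 \<in> set (position_cliques (ps ! m2))"
    using c2(1) unfolding set_segment_cliques by blast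
  obtain m3 where m3: "m3 < a - 1 \<or> b \<le> m3" "m3 < length ps" "c3 \<in> set (position_cliques (ps ! m3))"
    using c3 unfolding Un_iff set_segment_cliques by auto
  have "m1 \<noteq> m3" using m1 m3 by auto
  have "v \<in> fst (ps ! m1)"
  proof (rule ccontr)
    assume "v \<notin> fst (ps ! m1)"
    then have "v \<in> vso (snd (ps ! m1))" using position_cliques_bounds[OF m1(4)] c1(2) by blast
    moreover have "v \<in> fst (ps ! m3) \<union> vso (snd (ps ! m3))"
      using position_cliques_bounds[OF m3(3)] v3 by blast
    ultimately show False
      using node_ok_QNode_child_section[OF ok m1(3) m3(2)] node_ok_QNode_children[OF ok m1(3) m3(2)]
        \<open>m1 \<noteq> m3\<close> by blast
  qed
  then have s1: "v \<in> qsec ps (Suc m1)" using m1(3) by (simp add: qsec_Suc)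
  have "v \<notin> vso (snd (ps ! m3))"
    using node_ok_QNode_child_section[OF ok m3(2) m1(3)] \<open>v \<in> fst (ps ! m1)\<close> by blast
  then have s3: "v \<in> qsec ps (Suc m3)"
    using position_cliques_bounds[OF m3(3)] v3 m3(2) by (auto simp: qsec_Suc)
  have s2: "v \<notin> qsec ps (Suc m2)"
    using position_cliques_bounds[OF m2(4)] c2(2) m2(3) by (auto simp: qsec_Suc)
  obtain l r where lr: "\<And>j. v \<in> qsec ps j \<longleftrightarrow> l \<le> j \<and> j \<le> r"
    using qsec_interval[OF ok s1] by blast
  show False
  proof (cases "m3 < a - 1")
    case True
    then have "v \<in> qsec ps (a - 1) \<inter> qsec ps a" using s1 s3 m1 by (auto simp: lr)
    then have "v \<in> qsec ps b" using H1 by blast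
    then show False using s2 s3 True m2 by (auto simp: lr)
  next
    case False
    then have "v \<in> qsec ps b \<inter> qsec ps (b + 1)" using s1 s3 m1 m3(1) by (auto simp: lr)
    then have "v \<in> qsec ps a" using H2 by blast
    then show False using s2 s3 False m2 m3(1) ab by (auto simp: lr)
  qed
qed

lemma reversed_segment_consec_clique_order:
  assumes order: "consec_clique_order V E (pre @ map ((\<union>) U) (cliques (QNode ps)) @ suf)"
    and ok: "node_ok (QNode ps)"
    and U: "U \<inter> vs (QNode ps) = {}"
    and pre_suf: "\<forall>c\<in>set pre \<union> set suf. c \<inter> vs (QNode ps) = {}"
    and H1: "qsec ps (a - 1) \<inter> qsec ps a \<subseteq> qsec ps b"
    and H2: "qsec ps b \<inter> qsec ps (b + 1) \<subseteq> qsec ps a"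
    and ab: "1 \<le> a" "a < b" "b \<le> length ps"
  shows "consec_clique_order V E (pre @ map ((\<union>) U) (reversed_segment_cliques ps (a - 1) b) @ suf)"
proof -
  define Q1 where "Q1 = segment_cliques ps 0 (a - 1)"
  define Q2 where "Q2 = segment_cliques ps (a - 1) b"
  define Q3 where "Q3 = segment_cliques ps b (length ps)"
  define A where "A = pre @ map ((\<union>) U) Q1"
  define B where "B = map ((\<union>) U) Q2"
  define C where "C = map ((\<union>) U) Q3 @ suf"
  have "segment_cliques ps 0 b = Q1 @ Q2"
    using segment_cliques_append[of 0 "a - 1" b ps] ab unfolding Q1_def Q2_def by simp
  moreover have "cliques (QNode ps) = segment_cliques ps 0 b @ Q3"
    using segment_cliques_append[of 0 b "length ps" ps] ab unfolding Q3_def segment_cliques_all by simp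
  ultimately have "cliques (QNode ps) = Q1 @ Q2 @ Q3" by simp
  then have old: "pre @ map ((\<union>) U) (cliques (QNode ps)) @ suf = A @ B @ C"
    and new: "pre @ map ((\<union>) U) (reversed_segment_cliques ps (a - 1) b) @ suf = A @ rev B @ C"
    unfolding A_def B_def C_def Q1_def Q2_def Q3_def reversed_segment_cliques_def by (simp_all add: rev_map)
  have in_Q: "c \<subseteq> vs (QNode ps)" if "c \<in> set Q1 \<union> set Q2 \<union> set Q3" for c
    using that cliques_subset_vs[of c "QNode ps"] unfolding \<open>cliques (QNode ps) = Q1 @ Q2 @ Q3\<close>
    by simp
  from order have old_order: "distinct (A @ B @ C)" "set (A @ B @ C) = max_cliques V E"
    "\<And>v. consecutive (map (\<lambda>c. v \<in> c) (A @ B @ C))"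
    unfolding consec_clique_order_iff old by simp_all
  have "consecutive (map (\<lambda>c. v \<in> c) (A @ rev B @ C))" for v
  proof (rule consecutive_map_rev_middle)
    show "consecutive (map (\<lambda>c. v \<in> c) (A @ B @ C))" by (rule old_order(3))
  next
    fix x y
    assume "x \<in> set B" "y \<in> set B" "v \<in> x" "v \<notin> y"
    then obtain c1 c2 where c1: "c1 \<in> set Q2" "v \<in> c1" and c2: "c2 \<in> set Q2" "v \<notin> c2"
      and "v \<notin> U"
      unfolding B_def by auto
    then have "v \<in> vs (QNode ps)" using in_Q by blast
    then have "v \<notin> c" if "c \<in> set pre \<union> set suf" for c
      using pre_suf that by blast
    moreover have "v \<notin> c3" if "c3 \<in> set Q1 \<union> set Q3" for c3
      using vertex_split_by_segment_not_outside[OF ok H1 H2 ab(1,2), of c1 v c2 c3]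
        c1 c2 that unfolding Q1_def Q2_def Q3_def by simp
    ultimately show "\<forall>z\<in>set A \<union> set C. v \<notin> z"
      using \<open>v \<notin> U\<close> unfolding A_def C_def by auto
  qed
  moreover have "distinct (A @ rev B @ C)" "set (A @ rev B @ C) = max_cliques V E"
    using old_order(1,2) by (simp_all add: Un_commute Un_assoc)
  ultimately show ?thesis unfolding consec_clique_order_iff new by blast
qed

lemma reversed_segment_neq_reorder_cliques:
  assumes nonempty: "\<forall>m<length ps. position_cliques (ps ! m) \<noteq> []"
    and dist: "distinct (cliques (QNode ps))"
    and r: "reorder (QNode ps) (QNode qs)"
    and ij: "Suc i < j" "j \<le> length ps" "(i, j) \<noteq> (0, length ps)"
  shows "reversed_segment_cliques ps i j \<noteq> cliques (QNode qs)"
proof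
  assume eq: "reversed_segment_cliques ps i j = cliques (QNode qs)"
  obtain qs' where rel: "list_all2 (rel_prod (=) (rel_option reorder)) ps qs'"
    and qs: "qs = qs' \<or> qs = rev qs'"
    using r by (cases rule: reorder.cases) auto
  define k where "k = length ps"
  define B where "B m = set (position_cliques (ps ! m))" for m
  have len: "length qs' = k" using rel unfolding k_def by (simp add: list_all2_lengthD)
  have same: "mset (position_cliques (qs' ! m)) = mset (position_cliques (ps ! m))" if "m < k" for m
  proof -
    have "rel_prod (=) (rel_option reorder) (ps ! m) (qs' ! m)"
      using rel that unfolding k_def by (simp add: list_all2_nthD)
    then have "rel_prod (=) (rel_option (\<lambda>t t'. mset (cliques t) = mset (cliques t'))) (ps ! m) (qs' ! m)"
      by (rule prod.rel_mono_strong) (auto elim: option.rel_mono_strong intro: mset_cliques_reorder)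
    then show ?thesis by (simp add: mset_position_cliques_rel)
  qed
  have B': "set (position_cliques (qs' ! m)) = B m" if "m < k" for m
    using same[OF that] unfolding B_def by (metis mset_eq_setD)
  have ne': "position_cliques (qs' ! m) \<noteq> []" if "m < k" for m
    using same[OF that] nonempty that unfolding k_def by (metis mset_zero_iff)
  have "[] \<notin> set (map position_cliques ps)"
    using nonempty by (metis in_set_conv_nth length_map nth_map)
  then have disj: "B m \<inter> B m' = {}" if "m < k" "m' < k" "m \<noteq> m'" for m m'
    using distinct_concat_nth_disjoint[of "map position_cliques ps" m m'] dist that
    unfolding B_def k_def by simp
  have last_mid: "last (segment_cliques ps i j) \<in> B (j - 1)"
    using last_segment_cliques[of i j ps] ij nonempty unfolding B_def by simp
  have "hd (position_cliques (ps ! i)) \<in> set (segment_cliques ps i j)"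
    unfolding set_segment_cliques using nonempty ij by (intro exI[of _ i]) auto
  then have mid_ne: "segment_cliques ps i j \<noteq> []" by auto
  show False
  proof (cases "qs = qs'")
    case True
    have "length (segment_cliques qs' 0 i) = length (segment_cliques ps 0 i)"
      using len same by (intro length_segment_cliques_eq) (auto simp: k_def dest: mset_eq_length)
    moreover have "cliques (QNode qs) = segment_cliques qs' 0 i @ segment_cliques qs' i k"
      using True len segment_cliques_append[of 0 i k qs'] segment_cliques_all[of qs'] ij
      unfolding k_def by simp
    ultimately have "rev (segment_cliques ps i j) @ segment_cliques ps j k = segment_cliques qs' i k"
      using eq unfolding reversed_segment_cliques_def k_def by simp
    then have "last (segment_cliques ps i j) = hd (segment_cliques qs' i k)"
      using mid_ne by (metis hd_append2 hd_rev Nil_is_rev_conv)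
    moreover have "hd (segment_cliques qs' i k) \<in> B i"
      using hd_segment_cliques[of i k qs' "[]"] ne' B' ij len unfolding k_def by simp
    moreover have "B i \<inter> B (j - 1) = {}" using ij by (intro disj) (auto simp: k_def)
    ultimately show False using last_mid by auto
  next
    case False
    then have qs_rev: "qs = rev qs'" using qs by simp
    have "ps \<noteq> []" using ij by auto
    have "hd (cliques (QNode qs)) \<in> set (position_cliques (qs' ! (k - 1)))"
      using hd_segment_cliques[of 0 k "rev qs'" "[]"] segment_cliques_all[of "rev qs'"] ne' ij len qs_rev
        \<open>ps \<noteq> []\<close> unfolding k_def by (simp add: rev_nth)
    then have hd_qs: "hd (cliques (QNode qs)) \<in> B (k - 1)"
      using B' ij unfolding k_def by simp
    show False
    proof (cases "i = 0")
      case True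
      then have "hd (reversed_segment_cliques ps i j) = last (segment_cliques ps i j)"
        using mid_ne by (simp add: reversed_segment_cliques_def hd_rev hd_append2)
      moreover have "B (j - 1) \<inter> B (k - 1) = {}" using ij True by (intro disj) (auto simp: k_def)
      ultimately show False using hd_qs last_mid eq by auto
    next
      case False
      then have "hd (reversed_segment_cliques ps i j) \<in> B 0"
        using hd_segment_cliques[of 0 i ps] nonempty[rule_format, of 0] ij \<open>ps \<noteq> []\<close>
        unfolding reversed_segment_cliques_def B_def by simp
      moreover have "B 0 \<inter> B (k - 1) = {}" using ij by (intro disj) (auto simp: k_def)
      ultimately show False using hd_qs eq by auto
    qed
  qed
qed

lemma reversed_segment_not_cliques_of_reorder:
  assumes tree_ok: "\<forall>t\<in>nodes T. node_ok t" and QT: "QNode ps \<in> nodes T"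
    and sub: "subtree_under U (QNode ps) T"
    and U: "U \<inter> vs (QNode ps) = {}"
    and dist: "distinct (pre @ map ((\<union>) U) (cliques (QNode ps)) @ suf)"
    and r: "reorder T T'"
    and T': "cliques T' = pre @ map ((\<union>) U) (reversed_segment_cliques ps i j) @ suf"
    and ij: "Suc i < j" "j \<le> length ps" "(i, j) \<noteq> (0, length ps)"
  shows False
proof -
  obtain S' where "reorder (QNode ps) S'" "subtree_under U S' T'"
    using subtree_under_reorder[OF sub r] by blast
  moreover from this obtain qs where "S' = QNode qs" by (cases rule: reorder.cases) auto
  ultimately have rq: "reorder (QNode ps) (QNode qs)" and "subtree_under U (QNode qs) T'" by simp_all
  then obtain pre' suf' where T'_qs: "cliques T' = pre' @ map ((\<union>) U) (cliques (QNode qs)) @ suf'"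
    using cliques_subtree_under by blast
  let ?R = "reversed_segment_cliques ps i j"
  have mset_R: "mset ?R = mset (cliques (QNode ps))"
    using ij by (intro mset_reversed_segment_cliques) simp_all
  have set_R: "set ?R = set (cliques (QNode ps))" using mset_eq_setD[OF mset_R] .
  have set_qs: "set (cliques (QNode qs)) = set (cliques (QNode ps))"
    using mset_eq_setD[OF mset_cliques_reorder[OF rq]] by (rule sym)
  have mset_eq: "mset (pre @ map ((\<union>) U) ?R @ suf) = mset (pre @ map ((\<union>) U) (cliques (QNode ps)) @ suf)"
    by (simp only: mset_append mset_map mset_R)
  have dist_R: "distinct (pre @ map ((\<union>) U) ?R @ suf)"
    using dist unfolding mset_eq_imp_distinct_iff[OF mset_eq] .
  have "pre @ map ((\<union>) U) ?R @ suf = pre' @ map ((\<union>) U) (cliques (QNode qs)) @ suf'"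
    using T'_qs unfolding T' .
  then have "map ((\<union>) U) ?R = map ((\<union>) U) (cliques (QNode qs))"
    by (rule distinct_append_middle_eq[OF dist_R]) (simp only: set_map set_R set_qs)
  moreover have "inj_on ((\<union>) U) (set (cliques (QNode ps)))"
  proof (rule inj_onI)
    fix x y
    assume "x \<in> set (cliques (QNode ps))" "y \<in> set (cliques (QNode ps))"
    then have "x \<subseteq> vs (QNode ps)" "y \<subseteq> vs (QNode ps)" by (simp_all only: cliques_subset_vs)
    moreover assume "U \<union> x = U \<union> y"
    ultimately show "x = y" using U by blast
  qed
  ultimately have "?R = cliques (QNode qs)" by (simp only: inj_on_map_eq_map set_R set_qs Un_absorb)
  have "\<forall>t\<in>nodes (QNode ps). node_ok t" using tree_ok nodes_subset_nodes[OF QT] by blast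
  then have "\<forall>m<length ps. position_cliques (ps ! m) \<noteq> []" by (simp add: position_cliques_nonempty)
  moreover have "distinct (cliques (QNode ps))"
    using dist by (simp only: distinct_append distinct_map)
  ultimately have "?R \<noteq> cliques (QNode qs)" using rq ij by (rule reversed_segment_neq_reorder_cliques)
  then show False using \<open>?R = cliques (QNode qs)\<close> by contradiction
qed

theorem mainTheorem13:
  fixes V :: "'v set" and E :: "('v \<times> 'v) set" and T :: "'v mpq"
    and ps :: "('v set \<times> 'v mpq option) list" and a b :: nat
  assumes "interval_graph V E"
    and "is_MPQ_tree V E T"
    and "QNode ps \<in> nodes T"
    and "1 \<le> a" and "a < b" and "b \<le> length ps"
    and "(a, b) \<noteq> (1, length ps)"
  shows "\<exists>v. v \<in> ((qsec ps (a - 1) \<inter> qsec ps a) - qsec ps b)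
                 \<union> ((qsec ps b \<inter> qsec ps (b + 1)) - qsec ps a)"
proof (rule ccontr)
  assume "\<not> ?thesis"
  then have H1: "qsec ps (a - 1) \<inter> qsec ps a \<subseteq> qsec ps b"
    and H2: "qsec ps b \<inter> qsec ps (b + 1) \<subseteq> qsec ps a" by auto
  have tree_ok: "\<forall>t\<in>nodes T. node_ok t"
    and orders: "{cliques T' | T'. reorder T T'} = {xs. consec_clique_order V E xs}"
    using assms(2) unfolding is_MPQ_tree_def by blast+
  obtain U where sub: "subtree_under U (QNode ps) T" using subtree_under_exists[OF assms(3)] by blast
  then obtain pre suf where U: "U \<inter> vs (QNode ps) = {}"
    and T: "cliques T = pre @ map ((\<union>) U) (cliques (QNode ps)) @ suf"
    and pre_suf: "\<forall>c\<in>set pre \<union> set suf. c \<inter> vs (QNode ps) = {}"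
    using cliques_subtree_under_disjoint[OF sub tree_ok] by blast
  have "cliques T \<in> {cliques T' | T'. reorder T T'}" using reorder_refl[of T] by blast
  then have "consec_clique_order V E (cliques T)" unfolding orders by (rule CollectD)
  then have order: "consec_clique_order V E (pre @ map ((\<union>) U) (cliques (QNode ps)) @ suf)"
    by (simp only: T)
  define L where "L = pre @ map ((\<union>) U) (reversed_segment_cliques ps (a - 1) b) @ suf"
  have "node_ok (QNode ps)" using tree_ok assms(3) by blast
  then have "consec_clique_order V E L"
    unfolding L_def by (rule reversed_segment_consec_clique_order[OF order _ U pre_suf H1 H2 assms(4-6)])
  then have "L \<in> {cliques T' | T'. reorder T T'}" unfolding orders by (rule CollectI)
  then obtain T' where T': "reorder T T'" "cliques T' = L" by blast
  have dist: "distinct (pre @ map ((\<union>) U) (cliques (QNode ps)) @ suf)"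
    using order unfolding consec_clique_order_def by (rule conjunct1)
  have "Suc (a - 1) < b" "(a - 1, b) \<noteq> (0, length ps)" using assms(4,5,7) by auto
  then show False
    using reversed_segment_not_cliques_of_reorder[OF tree_ok assms(3) sub U dist T'(1) T'(2)[unfolded L_def]] assms(6)
    by blast
qed

end
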